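(* Suppose $x^\dagger\neq0$ satisfies the source condition $x^\dagger=(A^*A)^\mu\omega$ with $\|\omega\|\le C_s$ and $0<\mu\le1$. Then there is a constant $C$ (depending on $\mu$, $C_s$, $\alpha_{\max}$ and $\|A\|$) such that for all $\alpha\in(0,\alpha_{\max})$ $$\|x_\alpha-x^\dagger\|\le\frac{C}{\|A^*Ax^\dagger\|^{2\mu}}\,\psi_{SL}(\alpha,x^\dagger)^{2\mu}.$$
   Context: Let $X,Y$ be real Hilbert spaces and $A:X\to Y$ a compact linear operator with singular system $(\sigma_i,u_i,v_i)_i$, $\sigma_i>0$; put $\lambda_i=\sigma_i^2$. Let $x^\dagger\in N(A)^\perp$ (minimum-norm solution), $y=Ax^\dagger$, $x_\alpha=(A^*A+\alpha I)^{-1}A^*y$, $\alpha_{\max}>0$ fixed, and $\psi_{SL}(\alpha,x^\dagger):=\Big(\sum_i\frac{\alpha\lambda_i^2}{(\lambda_i+\alpha)^3}|\langle x^\dagger,u_i\rangle|^2\Big)^{1/2}$. *)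

theory Defs
  imports "HOL-Analysis.Analysis"
begin

text \<open>The index set I (finite or countably infinite) is a subset of nat; u and v are
  orthonormal families, sigma_i > 0, A x = sum_i sigma_i <x,u_i> v_i, and
  sigma_i -> 0 (only finitely many sigma_i exceed any epsilon > 0), which expresses
  compactness.\<close>
definition singular_system ::
  "('a::{real_inner,complete_space} \<Rightarrow> 'b::{real_inner,complete_space}) \<Rightarrow> nat set
     \<Rightarrow> (nat \<Rightarrow> real) \<Rightarrow> (nat \<Rightarrow> 'a) \<Rightarrow> (nat \<Rightarrow> 'b) \<Rightarrow> bool" where
  "singular_system A I \<sigma> u v \<longleftrightarrow>
     bounded_linear A \<and>
     (\<forall>i\<in>I. \<sigma> i > 0) \<and>
     (\<forall>i\<in>I. \<forall>j\<in>I. inner (u i) (u j) = (if i = j then 1 else 0)) \<and>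
     (\<forall>i\<in>I. \<forall>j\<in>I. inner (v i) (v j) = (if i = j then 1 else 0)) \<and>
     (\<forall>x. ((\<lambda>i. (\<sigma> i * inner x (u i)) *\<^sub>R v i) has_sum A x) I) \<and>
     (\<forall>\<epsilon>>0. finite {i\<in>I. \<sigma> i \<ge> \<epsilon>})"

definition is_adjoint :: "('a::real_inner \<Rightarrow> 'b::real_inner) \<Rightarrow> ('b \<Rightarrow> 'a) \<Rightarrow> bool" where
  "is_adjoint A B \<longleftrightarrow> (\<forall>x y. inner (A x) y = inner x (B y))"

definition tikhonov :: "('a::real_inner \<Rightarrow> 'b::real_inner) \<Rightarrow> ('b \<Rightarrow> 'a) \<Rightarrow> real \<Rightarrow> 'b \<Rightarrow> 'a" where
  "tikhonov A Aadj \<alpha> y = (THE x. Aadj (A x) + \<alpha> *\<^sub>R x = Aadj y)"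

text \<open>Fractional power (A^*A)^mu w (mu > 0) via the spectral decomposition of A^*A:
  sum_i lambda_i^mu <w,u_i> u_i with lambda_i = sigma_i^2 (kernel part is mapped to 0).\<close>
definition sv_power :: "nat set \<Rightarrow> (nat \<Rightarrow> real) \<Rightarrow> (nat \<Rightarrow> 'a::real_inner) \<Rightarrow> real \<Rightarrow> 'a \<Rightarrow> 'a" where
  "sv_power I \<sigma> u \<mu> w = infsum (\<lambda>i. ((\<sigma> i)\<^sup>2 powr \<mu> * inner w (u i)) *\<^sub>R u i) I"

definition psi_SL :: "nat set \<Rightarrow> (nat \<Rightarrow> real) \<Rightarrow> (nat \<Rightarrow> 'a::real_inner) \<Rightarrow> real \<Rightarrow> 'a \<Rightarrow> real" where
  "psi_SL I \<sigma> u \<alpha> x = sqrt (infsum (\<lambda>i. \<alpha> * ((\<sigma> i)\<^sup>2)\<^sup>2 / ((\<sigma> i)\<^sup>2 + \<alpha>) ^ 3 * (inner x (u i))\<^sup>2) I)"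

end

theory Submission
  imports Defs
begin

text \<open>In the singular basis the Tikhonov error x_alpha - x_dagger has coefficients
  -alpha / (lambda_i + alpha) <x_dagger, u_i>, and the source condition gives
  <x_dagger, u_i> = lambda_i^mu <omega, u_i>. The elementary bound
  alpha lambda^mu / (lambda + alpha) <= alpha^mu (for 0 < mu <= 1) and Bessel's inequality yield
  ||x_alpha - x_dagger|| <= ||omega|| alpha^mu. Conversely lambda_i + alpha <= ||A||^2 + alpha_max =: M, so
  psi_SL(alpha, x_dagger)^2 >= alpha M^-3 sum_i lambda_i^2 <x_dagger, u_i>^2 = alpha M^-3 ||A^*A x_dagger||^2, which bounds
  alpha^mu by M^(3 mu) psi_SL^(2 mu) / ||A^*A x_dagger||^(2 mu). Hence C = C_s M^(3 mu) works.\<close>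

lemma summable_on_if_tails_small:
  fixes f :: "'i \<Rightarrow> 'b::{real_normed_vector,complete_space}"
  assumes "\<And>e. e > 0 \<Longrightarrow> \<exists>F0. finite F0 \<and> F0 \<subseteq> A \<and>
                 (\<forall>G. finite G \<longrightarrow> G \<subseteq> A - F0 \<longrightarrow> norm (sum f G) < e)"
  shows "f summable_on A"
proof -
  have "cauchy_filter (filtermap (sum f) (finite_subsets_at_top A))"
    unfolding cauchy_filter_metric_filtermap
  proof (intro allI impI)
    fix e :: real
    assume "e > 0"
    then obtain F0 where F0: "finite F0" "F0 \<subseteq> A"
      and small: "\<And>G. finite G \<Longrightarrow> G \<subseteq> A - F0 \<Longrightarrow> norm (sum f G) < e/2"
      using assms[of "e/2"] by auto
    define P where "P F \<longleftrightarrow> finite F \<and> F0 \<subseteq> F \<and> F \<subseteq> A" for F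
    have "eventually P (finite_subsets_at_top A)"
      unfolding P_def eventually_finite_subsets_at_top using F0 by blast
    moreover have "dist (sum f F1) (sum f F2) < e" if "P F1" "P F2" for F1 F2
    proof -
      have split: "sum f F = sum f F0 + sum f (F - F0)" if "P F" for F
        using that unfolding P_def by (metis sum.subset_diff add.commute)
      have "dist (sum f F1) (sum f F2) = norm (sum f (F1 - F0) - sum f (F2 - F0))"
        using split[OF \<open>P F1\<close>] split[OF \<open>P F2\<close>] by (simp add: dist_norm)
      also have "\<dots> \<le> norm (sum f (F1 - F0)) + norm (sum f (F2 - F0))"
        by (rule norm_triangle_ineq4)
      also have "\<dots> < e/2 + e/2"
        using that by (intro add_strict_mono small) (auto simp: P_def)
      finally show ?thesis by simp
    qed
    ultimately show "\<exists>P. eventually P (finite_subsets_at_top A) \<and>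
        (\<forall>F1 F2. P F1 \<and> P F2 \<longrightarrow> dist (sum f F1) (sum f F2) < e)"
      by blast
  qed
  moreover have "complete (UNIV :: 'b set)"
    by (meson Cauchy_convergent UNIV_I complete_def convergent_def)
  ultimately obtain L where "(sum f \<longlongrightarrow> L) (finite_subsets_at_top A)"
    using complete_uniform[where S = UNIV] by (force simp add: filterlim_def)
  then show ?thesis
    unfolding summable_on_def has_sum_def by blast
qed

lemma summable_on_if_norm_sum_squared_le:
  fixes f :: "'i \<Rightarrow> 'b::{real_normed_vector,complete_space}"
  assumes g: "g summable_on A" and g_nonneg: "\<And>i. i \<in> A \<Longrightarrow> 0 \<le> g i"
    and le: "\<And>G. finite G \<Longrightarrow> G \<subseteq> A \<Longrightarrow> (norm (sum f G))\<^sup>2 \<le> sum g G"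
  shows "f summable_on A"
proof (rule summable_on_if_tails_small)
  fix e :: real
  assume "e > 0"
  then obtain F0 where F0: "finite F0" "F0 \<subseteq> A" and close: "dist (sum g F0) (infsum g A) \<le> e\<^sup>2 / 2"
    using infsum_finite_approximation[OF g, of "e\<^sup>2 / 2"] by auto
  have "norm (sum f G) < e" if G: "finite G" "G \<subseteq> A - F0" for G
  proof -
    have "sum g (F0 \<union> G) = sum g F0 + sum g G"
      using F0 G by (intro sum.union_disjoint) auto
    moreover have "sum g (F0 \<union> G) \<le> infsum g A"
      using F0 G g_nonneg by (intro finite_sum_le_infsum g) auto
    ultimately have "sum g G \<le> e\<^sup>2 / 2"
      using close unfolding dist_real_def by linarith
    moreover have "(norm (sum f G))\<^sup>2 \<le> sum g G"
      using le G by blast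
    moreover have "e\<^sup>2 / 2 < e\<^sup>2"
      using \<open>e > 0\<close> by simp
    ultimately have "(norm (sum f G))\<^sup>2 < e\<^sup>2"
      by linarith
    then show ?thesis
      using \<open>e > 0\<close> by (simp add: power_less_imp_less_base)
  qed
  then show "\<exists>F0. finite F0 \<and> F0 \<subseteq> A \<and> (\<forall>G. finite G \<longrightarrow> G \<subseteq> A - F0 \<longrightarrow> norm (sum f G) < e)"
    using F0 by blast
qed

definition orthonormal_on :: "'i set \<Rightarrow> ('i \<Rightarrow> 'a::real_inner) \<Rightarrow> bool" where
  "orthonormal_on I u \<longleftrightarrow> (\<forall>i\<in>I. \<forall>j\<in>I. inner (u i) (u j) = (if i = j then 1 else 0))"

lemma orthonormal_on_norm_sum_squared:
  assumes "orthonormal_on I u" "finite G" "G \<subseteq> I"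
  shows "(norm (\<Sum>i\<in>G. c i *\<^sub>R u i))\<^sup>2 = (\<Sum>i\<in>G. (c i)\<^sup>2)"
proof -
  have "(norm (\<Sum>i\<in>G. c i *\<^sub>R u i))\<^sup>2 = (\<Sum>i\<in>G. inner (c i *\<^sub>R u i) (\<Sum>j\<in>G. c j *\<^sub>R u j))"
    by (simp add: power2_norm_eq_inner inner_sum_left)
  also have "\<dots> = (\<Sum>i\<in>G. \<Sum>j\<in>G. c i * c j * inner (u i) (u j))"
    by (simp add: inner_sum_right mult_ac)
  also have "\<dots> = (\<Sum>i\<in>G. \<Sum>j\<in>G. if j = i then c i * c i else 0)"
    using assms unfolding orthonormal_on_def by (intro sum.cong refl) (auto simp: subset_iff)
  also have "\<dots> = (\<Sum>i\<in>G. (c i)\<^sup>2)"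
    using assms(2) by (simp add: power2_eq_square)
  finally show ?thesis .
qed

lemma orthonormal_on_summable:
  fixes u :: "'i \<Rightarrow> 'b::{real_inner,complete_space}"
  assumes "orthonormal_on I u" "(\<lambda>i. (c i)\<^sup>2) summable_on I"
  shows "(\<lambda>i. c i *\<^sub>R u i) summable_on I"
  by (rule summable_on_if_norm_sum_squared_le[OF assms(2)])
     (simp_all add: orthonormal_on_norm_sum_squared[OF assms(1)])

lemma orthonormal_on_coeff:
  assumes "orthonormal_on I u" "((\<lambda>i. c i *\<^sub>R u i) has_sum s) I" "j \<in> I"
  shows "inner s (u j) = c j"
proof -
  have "((\<lambda>i. inner (c i *\<^sub>R u i) (u j)) has_sum inner s (u j)) I"
    by (rule has_sum_bounded_linear[OF bounded_linear_inner_left assms(2)])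
  moreover have "((\<lambda>i. inner (c i *\<^sub>R u i) (u j)) has_sum c j) I"
    using assms(1,3) unfolding orthonormal_on_def
    by (intro has_sum_finite_neutralI[of "{j}"]) auto
  ultimately show ?thesis
    by (rule has_sum_unique)
qed

lemma orthonormal_on_parseval:
  assumes "orthonormal_on I u" "((\<lambda>i. c i *\<^sub>R u i) has_sum s) I"
  shows "((\<lambda>i. (c i)\<^sup>2) has_sum (norm s)\<^sup>2) I"
proof -
  have "((\<lambda>i. inner s (c i *\<^sub>R u i)) has_sum inner s s) I"
    by (rule has_sum_bounded_linear[OF bounded_linear_inner_right assms(2)])
  moreover have "inner s (c i *\<^sub>R u i) = (c i)\<^sup>2" if "i \<in> I" for i
    using orthonormal_on_coeff[OF assms that] by (simp add: power2_eq_square)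
  ultimately have "((\<lambda>i. (c i)\<^sup>2) has_sum inner s s) I"
    by (simp cong: has_sum_cong)
  then show ?thesis
    by (simp add: power2_norm_eq_inner)
qed

lemma orthonormal_on_bessel:
  assumes "orthonormal_on I u"
  shows "(\<lambda>i. (inner w (u i))\<^sup>2) summable_on I"
    and "infsum (\<lambda>i. (inner w (u i))\<^sup>2) I \<le> (norm w)\<^sup>2"
proof -
  have finite_bessel: "(\<Sum>i\<in>G. (inner w (u i))\<^sup>2) \<le> (norm w)\<^sup>2" if "finite G" "G \<subseteq> I" for G
  proof -
    define p where "p = (\<Sum>i\<in>G. inner w (u i) *\<^sub>R u i)"
    have "(norm p)\<^sup>2 = (\<Sum>i\<in>G. (inner w (u i))\<^sup>2)"
      unfolding p_def by (rule orthonormal_on_norm_sum_squared[OF assms that])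
    moreover have "inner w p = (\<Sum>i\<in>G. (inner w (u i))\<^sup>2)"
      unfolding p_def by (simp add: inner_sum_right power2_eq_square)
    moreover have "(norm (w - p))\<^sup>2 = (norm w)\<^sup>2 - 2 * inner w p + (norm p)\<^sup>2"
      by (simp add: power2_norm_eq_inner inner_diff_left inner_diff_right inner_commute)
    ultimately show ?thesis
      by (smt (verit) zero_le_power2)
  qed
  show summable: "(\<lambda>i. (inner w (u i))\<^sup>2) summable_on I"
    by (rule nonneg_bdd_above_summable_on) (use finite_bessel in \<open>auto intro!: bdd_aboveI\<close>)
  show "infsum (\<lambda>i. (inner w (u i))\<^sup>2) I \<le> (norm w)\<^sup>2"
    by (rule infsum_le_finite_sums[OF summable finite_bessel])
qed

lemma singular_system_orthonormal:
  assumes "singular_system A I \<sigma> u v"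
  shows "orthonormal_on I u" and "orthonormal_on I v"
  using assms unfolding singular_system_def orthonormal_on_def by blast+

lemma singular_system_inner_right_vector:
  assumes S: "singular_system A I \<sigma> u v" and "j \<in> I"
  shows "inner (A x) (v j) = \<sigma> j * inner x (u j)"
  using S assms(2) unfolding singular_system_def
  by (intro orthonormal_on_coeff[OF singular_system_orthonormal(2)[OF S]]) blast+

lemma singular_system_apply_left_vector:
  assumes S: "singular_system A I \<sigma> u v" and "j \<in> I"
  shows "A (u j) = \<sigma> j *\<^sub>R v j"
proof -
  have "((\<lambda>i. (\<sigma> i * inner (u j) (u i)) *\<^sub>R v i) has_sum A (u j)) I"
    using S unfolding singular_system_def by blast
  moreover have "((\<lambda>i. (\<sigma> i * inner (u j) (u i)) *\<^sub>R v i) has_sum \<sigma> j *\<^sub>R v j) I"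
    using singular_system_orthonormal(1)[OF S] \<open>j \<in> I\<close> unfolding orthonormal_on_def
    by (intro has_sum_finite_neutralI[of "{j}"]) auto
  ultimately show ?thesis
    by (rule has_sum_unique)
qed

lemma singular_system_has_sum_inner:
  assumes S: "singular_system A I \<sigma> u v"
  shows "((\<lambda>i. (\<sigma> i)\<^sup>2 * inner x (u i) * inner y (u i)) has_sum inner (A x) (A y)) I"
proof -
  have "((\<lambda>i. (\<sigma> i * inner x (u i)) *\<^sub>R v i) has_sum A x) I"
    using S unfolding singular_system_def by blast
  then have "((\<lambda>i. inner ((\<sigma> i * inner x (u i)) *\<^sub>R v i) (A y)) has_sum inner (A x) (A y)) I"
    by (rule has_sum_bounded_linear[OF bounded_linear_inner_left])
  moreover have "inner ((\<sigma> i * inner x (u i)) *\<^sub>R v i) (A y) = (\<sigma> i)\<^sup>2 * inner x (u i) * inner y (u i)"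
    if "i \<in> I" for i
    using singular_system_inner_right_vector[OF S that, of y]
    by (simp add: inner_commute power2_eq_square)
  ultimately show ?thesis
    by (rule has_sum_cong[THEN iffD1, rotated])
qed

lemma singular_system_value_le_onorm:
  assumes S: "singular_system A I \<sigma> u v" and "j \<in> I"
  shows "\<sigma> j \<le> onorm A"
proof -
  have "norm (u j) = 1" "norm (v j) = 1" "\<sigma> j > 0"
    using S \<open>j \<in> I\<close> unfolding singular_system_def by (auto simp: norm_eq_sqrt_inner)
  moreover have "norm (A (u j)) \<le> onorm A * norm (u j)"
    using S unfolding singular_system_def by (blast intro: onorm)
  ultimately show ?thesis
    by (simp add: singular_system_apply_left_vector[OF assms])
qed

text \<open>\<open>sv_power\<close> is an \<open>infsum\<close>, which is \<open>0\<close> for a non-summable series; a nonzero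
  value therefore certifies convergence of the defining series.\<close>

lemma has_sum_sv_power:
  assumes "sv_power I \<sigma> u \<mu> \<omega> \<noteq> 0"
  shows "((\<lambda>i. ((\<sigma> i)\<^sup>2 powr \<mu> * inner \<omega> (u i)) *\<^sub>R u i) has_sum sv_power I \<sigma> u \<mu> \<omega>) I"
proof -
  have "(\<lambda>i. ((\<sigma> i)\<^sup>2 powr \<mu> * inner \<omega> (u i)) *\<^sub>R u i) summable_on I"
    using assms infsum_not_exists unfolding sv_power_def by blast
  then show ?thesis
    unfolding sv_power_def by (rule has_sum_infsum)
qed

lemma normal_operator_nonzero:
  assumes "is_adjoint A B" and "\<forall>z. A z = 0 \<longrightarrow> inner x z = 0" and "x \<noteq> 0"
  shows "B (A x) \<noteq> 0"
proof
  assume "B (A x) = 0"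
  moreover have "inner (A x) (A x) = inner x (B (A x))"
    using assms(1) unfolding is_adjoint_def by blast
  ultimately have "A x = 0"
    by simp
  then have "inner x x = 0"
    using assms(2) by blast
  then show False
    using assms(3) by simp
qed

lemma adjoint_inner_left:
  assumes "is_adjoint A B"
  shows "inner (B y) x = inner y (A x)"
  using assms unfolding is_adjoint_def by (simp add: inner_commute)

lemma tikhonov_eqI:
  assumes A: "bounded_linear A" and adj: "is_adjoint A B" and "\<alpha> > 0"
    and normal_eq: "B (A x) + \<alpha> *\<^sub>R x = B y"
  shows "tikhonov A B \<alpha> y = x"
  unfolding tikhonov_def
proof (rule the_equality)
  show "B (A x) + \<alpha> *\<^sub>R x = B y"
    by (fact normal_eq)
  fix x'
  assume normal_eq': "B (A x') + \<alpha> *\<^sub>R x' = B y"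
  define d where "d = x' - x"
  have "0 = inner (B (A x') + \<alpha> *\<^sub>R x') d - inner (B (A x) + \<alpha> *\<^sub>R x) d"
    by (simp add: normal_eq normal_eq')
  also have "\<dots> = inner (A d) (A d) + \<alpha> * inner d d"
    using adjoint_inner_left[OF adj]
    by (simp add: d_def inner_add_left inner_diff_left inner_diff_right
        linear_diff[OF bounded_linear.linear[OF A]] algebra_simps)
  finally have "\<alpha> * inner d d \<le> 0"
    by (smt (verit) inner_ge_zero)
  then have "inner d d \<le> 0"
    using \<open>\<alpha> > 0\<close> by (simp add: mult_le_0_iff)
  then have "d = 0"
    by (metis inner_eq_zero_iff inner_ge_zero order_antisym)
  then show "x' = x"
    by (simp add: d_def)
qed

lemma singular_system_normal_equation:
  assumes S: "singular_system A I \<sigma> u v" and adj: "is_adjoint A B"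
    and xa: "((\<lambda>i. a i *\<^sub>R u i) has_sum xa) I"
    and coeff: "\<And>i. i \<in> I \<Longrightarrow> ((\<sigma> i)\<^sup>2 + \<alpha>) * a i = (\<sigma> i)\<^sup>2 * inner x (u i)"
  shows "B (A xa) + \<alpha> *\<^sub>R xa = B (A x)"
proof -
  note u = singular_system_orthonormal(1)[OF S]
  have "inner (B (A xa) + \<alpha> *\<^sub>R xa) z = inner (B (A x)) z" for z
  proof -
    have "((\<lambda>i. (\<sigma> i)\<^sup>2 * a i * inner z (u i)) has_sum inner (A xa) (A z)) I"
      using singular_system_has_sum_inner[OF S, of xa z] orthonormal_on_coeff[OF u xa]
      by (simp cong: has_sum_cong)
    moreover have "((\<lambda>i. \<alpha> * (a i * inner z (u i))) has_sum \<alpha> * inner xa z) I"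
      using has_sum_bounded_linear[OF bounded_linear_inner_left xa, of z]
      by (intro has_sum_cmult_right) (simp add: inner_commute)
    ultimately have "((\<lambda>i. (\<sigma> i)\<^sup>2 * a i * inner z (u i) + \<alpha> * (a i * inner z (u i)))
        has_sum inner (A xa) (A z) + \<alpha> * inner xa z) I"
      by (rule has_sum_add)
    then have "((\<lambda>i. ((\<sigma> i)\<^sup>2 + \<alpha>) * a i * inner z (u i))
        has_sum inner (A xa) (A z) + \<alpha> * inner xa z) I"
      by (simp add: algebra_simps)
    then have "((\<lambda>i. (\<sigma> i)\<^sup>2 * inner x (u i) * inner z (u i))
        has_sum inner (A xa) (A z) + \<alpha> * inner xa z) I"
      by (rule has_sum_cong[THEN iffD1, rotated]) (simp add: coeff)
    with singular_system_has_sum_inner[OF S, of x z]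
    have "inner (A xa) (A z) + \<alpha> * inner xa z = inner (A x) (A z)"
      using has_sum_unique by blast
    then show ?thesis
      by (simp add: adjoint_inner_left[OF adj] inner_add_left)
  qed
  then show ?thesis
    using vector_eq_rdot by blast
qed

lemma tikhonov_has_sum:
  assumes S: "singular_system A I \<sigma> u v" and adj: "is_adjoint A B" and "\<alpha> > 0"
  shows "((\<lambda>i. ((\<sigma> i)\<^sup>2 / ((\<sigma> i)\<^sup>2 + \<alpha>) * inner x (u i)) *\<^sub>R u i)
           has_sum tikhonov A B \<alpha> (A x)) I"
proof -
  define a where "a i = (\<sigma> i)\<^sup>2 / ((\<sigma> i)\<^sup>2 + \<alpha>) * inner x (u i)" for i
  note u = singular_system_orthonormal(1)[OF S]
  have pos: "0 < (\<sigma> i)\<^sup>2 + \<alpha>" for i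
    using add_nonneg_pos[OF zero_le_power2 \<open>\<alpha> > 0\<close>] .
  have "(\<lambda>i. (a i)\<^sup>2) summable_on I"
  proof (rule summable_on_comparison_test[OF orthonormal_on_bessel(1)[OF u, of x]])
    fix i
    have "0 \<le> (\<sigma> i)\<^sup>2 / ((\<sigma> i)\<^sup>2 + \<alpha>)" "(\<sigma> i)\<^sup>2 / ((\<sigma> i)\<^sup>2 + \<alpha>) \<le> 1"
      using pos[of i] \<open>\<alpha> > 0\<close> by auto
    then show "(a i)\<^sup>2 \<le> (inner x (u i))\<^sup>2"
      unfolding a_def power_mult_distrib by (simp add: mult_left_le_one_le power_le_one)
  qed simp
  then obtain xa where xa: "((\<lambda>i. a i *\<^sub>R u i) has_sum xa) I"
    using orthonormal_on_summable[OF u] unfolding summable_on_def by blast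
  have "((\<sigma> i)\<^sup>2 + \<alpha>) * a i = (\<sigma> i)\<^sup>2 * inner x (u i)" for i
    unfolding a_def using pos[of i] by simp
  then have "B (A xa) + \<alpha> *\<^sub>R xa = B (A x)"
    by (intro singular_system_normal_equation[OF S adj xa])
  then have "tikhonov A B \<alpha> (A x) = xa"
    using S adj \<open>\<alpha> > 0\<close> unfolding singular_system_def by (blast intro: tikhonov_eqI)
  with xa show ?thesis
    unfolding a_def by simp
qed

lemma tikhonov_error_has_sum:
  assumes S: "singular_system A I \<sigma> u v" and adj: "is_adjoint A B" and "\<alpha> > 0"
    and x: "((\<lambda>i. inner x (u i) *\<^sub>R u i) has_sum x) I"
  shows "((\<lambda>i. (\<alpha> / ((\<sigma> i)\<^sup>2 + \<alpha>) * inner x (u i))\<^sup>2)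
           has_sum (norm (tikhonov A B \<alpha> (A x) - x))\<^sup>2) I"
proof -
  have "((\<lambda>i. - (inner x (u i) *\<^sub>R u i)) has_sum - x) I"
    using x by (simp add: has_sum_uminus)
  from has_sum_add[OF tikhonov_has_sum[OF S adj \<open>\<alpha> > 0\<close>] this]
  have "((\<lambda>i. ((\<sigma> i)\<^sup>2 / ((\<sigma> i)\<^sup>2 + \<alpha>) * inner x (u i) - inner x (u i)) *\<^sub>R u i)
          has_sum tikhonov A B \<alpha> (A x) - x) I"
    by (simp add: scaleR_diff_left)
  moreover have "(\<sigma> i)\<^sup>2 / ((\<sigma> i)\<^sup>2 + \<alpha>) * c - c = - (\<alpha> / ((\<sigma> i)\<^sup>2 + \<alpha>) * c)" for i c
  proof -
    have "(\<sigma> i)\<^sup>2 + \<alpha> \<noteq> 0"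
      using add_nonneg_pos[OF zero_le_power2[of "\<sigma> i"] \<open>\<alpha> > 0\<close>] by simp
    then show ?thesis
      by (simp add: field_simps)
  qed
  ultimately have "((\<lambda>i. (- (\<alpha> / ((\<sigma> i)\<^sup>2 + \<alpha>) * inner x (u i))) *\<^sub>R u i)
          has_sum tikhonov A B \<alpha> (A x) - x) I"
    by simp
  from orthonormal_on_parseval[OF singular_system_orthonormal(1)[OF S] this]
  show ?thesis
    by simp
qed

lemma tikhonov_residual_factor_le:
  fixes l \<alpha> \<mu> :: real
  assumes "0 < l" "0 < \<alpha>" "0 < \<mu>" "\<mu> \<le> 1"
  shows "\<alpha> / (l + \<alpha>) * l powr \<mu> \<le> \<alpha> powr \<mu>"
proof -
  have "\<alpha> * l powr \<mu> = \<alpha> powr \<mu> * (\<alpha> powr (1 - \<mu>) * l powr \<mu>)"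
    using assms by (simp add: powr_add[symmetric])
  also have "\<dots> \<le> \<alpha> powr \<mu> * ((l + \<alpha>) powr (1 - \<mu>) * (l + \<alpha>) powr \<mu>)"
    using assms by (intro mult_left_mono mult_mono powr_mono2) auto
  also have "\<dots> = \<alpha> powr \<mu> * (l + \<alpha>)"
    using assms by (simp add: powr_add[symmetric])
  finally show ?thesis
    using assms by (simp add: divide_le_eq mult.commute)
qed

lemma tikhonov_error_le_source:
  assumes S: "singular_system A I \<sigma> u v" and adj: "is_adjoint A B"
    and "0 < \<alpha>" "0 < \<mu>" "\<mu> \<le> 1"
    and src: "x = sv_power I \<sigma> u \<mu> \<omega>" and "x \<noteq> 0"
  shows "norm (tikhonov A B \<alpha> (A x) - x) \<le> norm \<omega> * \<alpha> powr \<mu>"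
proof -
  note u = singular_system_orthonormal(1)[OF S]
  define w where "w i = inner \<omega> (u i)" for i
  have x_source: "((\<lambda>i. ((\<sigma> i)\<^sup>2 powr \<mu> * w i) *\<^sub>R u i) has_sum x) I"
    using has_sum_sv_power[of I \<sigma> u \<mu> \<omega>] src \<open>x \<noteq> 0\<close> unfolding w_def by simp
  have coeff: "inner x (u i) = (\<sigma> i)\<^sup>2 powr \<mu> * w i" if "i \<in> I" for i
    by (rule orthonormal_on_coeff[OF u x_source that])
  have "((\<lambda>i. inner x (u i) *\<^sub>R u i) has_sum x) I"
    using x_source by (simp add: coeff cong: has_sum_cong)
  note error = tikhonov_error_has_sum[OF S adj \<open>0 < \<alpha>\<close> this]
  have "((\<lambda>i. (\<alpha> powr \<mu>)\<^sup>2 * (w i)\<^sup>2) has_sum (\<alpha> powr \<mu>)\<^sup>2 * infsum (\<lambda>i. (w i)\<^sup>2) I) I"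
    using orthonormal_on_bessel(1)[OF u, of \<omega>] unfolding w_def
    by (intro has_sum_cmult_right has_sum_infsum)
  moreover have "(\<alpha> / ((\<sigma> i)\<^sup>2 + \<alpha>) * inner x (u i))\<^sup>2 \<le> (\<alpha> powr \<mu>)\<^sup>2 * (w i)\<^sup>2" if "i \<in> I" for i
  proof -
    have "0 < \<sigma> i"
      using S that unfolding singular_system_def by blast
    define f where "f = \<alpha> / ((\<sigma> i)\<^sup>2 + \<alpha>) * (\<sigma> i)\<^sup>2 powr \<mu>"
    have "f \<le> \<alpha> powr \<mu>"
      unfolding f_def using assms \<open>0 < \<sigma> i\<close> by (intro tikhonov_residual_factor_le) auto
    moreover have "0 \<le> f"
      unfolding f_def using \<open>0 < \<alpha>\<close> by (simp add: add_nonneg_pos less_imp_le)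
    ultimately have "f\<^sup>2 * (w i)\<^sup>2 \<le> (\<alpha> powr \<mu>)\<^sup>2 * (w i)\<^sup>2"
      by (intro mult_right_mono power_mono) auto
    moreover have "(\<alpha> / ((\<sigma> i)\<^sup>2 + \<alpha>) * inner x (u i))\<^sup>2 = f\<^sup>2 * (w i)\<^sup>2"
      unfolding f_def coeff[OF that] mult.assoc[symmetric] power_mult_distrib ..
    ultimately show ?thesis
      by simp
  qed
  ultimately have "(norm (tikhonov A B \<alpha> (A x) - x))\<^sup>2 \<le> (\<alpha> powr \<mu>)\<^sup>2 * infsum (\<lambda>i. (w i)\<^sup>2) I"
    by (rule has_sum_mono[OF error])
  also have "\<dots> \<le> (\<alpha> powr \<mu>)\<^sup>2 * (norm \<omega>)\<^sup>2"
    using orthonormal_on_bessel(2)[OF u, of \<omega>] unfolding w_def by (intro mult_left_mono) auto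
  also have "\<dots> = (norm \<omega> * \<alpha> powr \<mu>)\<^sup>2"
    by (simp add: power_mult_distrib)
  finally show ?thesis
    by (rule power2_le_imp_le) simp
qed

lemma singular_system_norm_normal_has_sum:
  assumes S: "singular_system A I \<sigma> u v" and adj: "is_adjoint A B"
  shows "((\<lambda>i. ((\<sigma> i)\<^sup>2)\<^sup>2 * (inner x (u i))\<^sup>2) has_sum (norm (B (A x)))\<^sup>2) I"
proof -
  have normal_coeff: "inner (B (A x)) (u i) = (\<sigma> i)\<^sup>2 * inner x (u i)" if "i \<in> I" for i
    by (simp add: adjoint_inner_left[OF adj] singular_system_apply_left_vector[OF S that]
        singular_system_inner_right_vector[OF S that] power2_eq_square)
  have "inner (A (B (A x))) (A x) = (norm (B (A x)))\<^sup>2"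
    using adj unfolding is_adjoint_def by (simp add: power2_norm_eq_inner)
  then have "((\<lambda>i. (\<sigma> i)\<^sup>2 * inner (B (A x)) (u i) * inner x (u i)) has_sum (norm (B (A x)))\<^sup>2) I"
    using singular_system_has_sum_inner[OF S, of "B (A x)" x] by simp
  then show ?thesis
    by (rule has_sum_cong[THEN iffD1, rotated]) (simp add: normal_coeff power2_eq_square)
qed

lemma psi_SL_nonneg:
  assumes "0 < \<alpha>"
  shows "0 \<le> psi_SL I \<sigma> u \<alpha> x"
  unfolding psi_SL_def using assms by (simp add: infsum_nonneg)

lemma psi_SL_power2_lower_bound:
  assumes S: "singular_system A I \<sigma> u v" and adj: "is_adjoint A B"
    and "0 < \<alpha>" and M: "(onorm A)\<^sup>2 + \<alpha> \<le> M"
  shows "\<alpha> / M ^ 3 * (norm (B (A x)))\<^sup>2 \<le> (psi_SL I \<sigma> u \<alpha> x)\<^sup>2"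
proof -
  define t where "t i = \<alpha> * ((\<sigma> i)\<^sup>2)\<^sup>2 / ((\<sigma> i)\<^sup>2 + \<alpha>) ^ 3 * (inner x (u i))\<^sup>2" for i
  have pos: "0 < (\<sigma> i)\<^sup>2 + \<alpha>" for i
    using add_nonneg_pos[OF zero_le_power2 \<open>0 < \<alpha>\<close>] .
  have "((\<lambda>i. \<alpha> / M ^ 3 * (((\<sigma> i)\<^sup>2)\<^sup>2 * (inner x (u i))\<^sup>2))
      has_sum \<alpha> / M ^ 3 * (norm (B (A x)))\<^sup>2) I"
    by (rule has_sum_cmult_right[OF singular_system_norm_normal_has_sum[OF S adj]])
  moreover have "(t has_sum infsum t I) I"
  proof (rule has_sum_infsum, rule summable_on_comparison_test)
    show "(\<lambda>i. (inner x (u i))\<^sup>2) summable_on I"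
      by (rule orthonormal_on_bessel(1)[OF singular_system_orthonormal(1)[OF S]])
    fix i
    have "\<alpha> * ((\<sigma> i)\<^sup>2)\<^sup>2 \<le> ((\<sigma> i)\<^sup>2 + \<alpha>) * ((\<sigma> i)\<^sup>2 + \<alpha>)\<^sup>2"
      using \<open>0 < \<alpha>\<close> by (intro mult_mono power_mono) simp_all
    also have "\<dots> = ((\<sigma> i)\<^sup>2 + \<alpha>) ^ 3"
      by (simp add: power3_eq_cube power2_eq_square)
    finally have "\<alpha> * ((\<sigma> i)\<^sup>2)\<^sup>2 / ((\<sigma> i)\<^sup>2 + \<alpha>) ^ 3 \<le> 1"
      using pos[of i] by (simp add: divide_le_eq_1)
    then show "t i \<le> (inner x (u i))\<^sup>2"
      unfolding t_def using \<open>0 < \<alpha>\<close> by (intro mult_left_le_one_le) simp_all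
    show "0 \<le> t i"
      unfolding t_def using \<open>0 < \<alpha>\<close> by simp
  qed
  moreover have "\<alpha> / M ^ 3 * (((\<sigma> i)\<^sup>2)\<^sup>2 * (inner x (u i))\<^sup>2) \<le> t i" if "i \<in> I" for i
  proof -
    have "0 < \<sigma> i" "\<sigma> i \<le> onorm A"
      using S that singular_system_value_le_onorm[OF S that] unfolding singular_system_def by auto
    then have "(\<sigma> i)\<^sup>2 + \<alpha> \<le> M"
      using M power_mono[of "\<sigma> i" "onorm A" 2] by linarith
    then have "\<alpha> / M ^ 3 \<le> \<alpha> / ((\<sigma> i)\<^sup>2 + \<alpha>) ^ 3"
      using \<open>0 < \<alpha>\<close> pos[of i] by (intro divide_left_mono power_mono) simp_all
    then have "\<alpha> / M ^ 3 * (((\<sigma> i)\<^sup>2)\<^sup>2 * (inner x (u i))\<^sup>2)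
        \<le> \<alpha> / ((\<sigma> i)\<^sup>2 + \<alpha>) ^ 3 * (((\<sigma> i)\<^sup>2)\<^sup>2 * (inner x (u i))\<^sup>2)"
      by (rule mult_right_mono) simp
    then show ?thesis
      by (simp add: t_def)
  qed
  ultimately have "\<alpha> / M ^ 3 * (norm (B (A x)))\<^sup>2 \<le> infsum t I"
    by (rule has_sum_mono)
  also have "\<dots> = (psi_SL I \<sigma> u \<alpha> x)\<^sup>2"
    unfolding psi_SL_def t_def[abs_def] using \<open>0 < \<alpha>\<close> by (simp add: infsum_nonneg)
  finally show ?thesis .
qed

lemma power_powr_real:
  fixes x a :: real
  assumes "0 < x"
  shows "(x ^ n) powr a = x powr (n * a)"
  using assms by (simp add: powr_powr flip: powr_realpow)

lemma powr_le_of_power2_lower_bound: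
  fixes \<alpha> \<mu> M N \<psi> :: real
  assumes "0 < \<alpha>" "0 < \<mu>" "0 < M" "0 < N" "0 \<le> \<psi>"
    and lower: "\<alpha> / M ^ 3 * N\<^sup>2 \<le> \<psi>\<^sup>2"
  shows "\<alpha> powr \<mu> \<le> M powr (3 * \<mu>) / N powr (2 * \<mu>) * \<psi> powr (2 * \<mu>)"
proof -
  have "0 < \<alpha> / M ^ 3 * N\<^sup>2"
    using assms by simp
  then have "0 < \<psi>"
    using lower \<open>0 \<le> \<psi>\<close> by (cases "\<psi> = 0") auto
  have "\<alpha> powr \<mu> / M powr (3 * \<mu>) * N powr (2 * \<mu>) = (\<alpha> / M ^ 3 * N\<^sup>2) powr \<mu>"
    using assms by (simp add: powr_mult powr_divide power_powr_real)
  also have "\<dots> \<le> (\<psi>\<^sup>2) powr \<mu>"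
    using assms by (intro powr_mono2) auto
  also have "\<dots> = \<psi> powr (2 * \<mu>)"
    using \<open>0 < \<psi>\<close> by (simp add: power_powr_real)
  finally show ?thesis
    using assms by (simp add: field_simps)
qed

theorem mainTheorem5:
  fixes \<mu> C\<^sub>s \<alpha>max normA :: real
  assumes "0 < \<mu>" and "\<mu> \<le> 1" and "0 < \<alpha>max"
  shows "\<exists>C::real. \<forall>(A::'a::{real_inner,complete_space} \<Rightarrow> 'b::{real_inner,complete_space})
            Aadj I \<sigma> u v (xd::'a) \<omega>.
     singular_system A I \<sigma> u v \<and> is_adjoint A Aadj \<and> onorm A = normA \<and>
     (\<forall>z. A z = 0 \<longrightarrow> inner xd z = 0) \<and> xd \<noteq> 0 \<and>
     xd = sv_power I \<sigma> u \<mu> \<omega> \<and> norm \<omega> \<le> C\<^sub>s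
     \<longrightarrow> (\<forall>\<alpha>. 0 < \<alpha> \<and> \<alpha> < \<alpha>max \<longrightarrow>
          norm (tikhonov A Aadj \<alpha> (A xd) - xd)
            \<le> C / norm (Aadj (A xd)) powr (2 * \<mu>) * psi_SL I \<sigma> u \<alpha> xd powr (2 * \<mu>))"
proof (intro exI[of _ "\<bar>C\<^sub>s\<bar> * (normA\<^sup>2 + \<alpha>max) powr (3 * \<mu>)"] allI impI, elim conjE)
  fix A :: "'a \<Rightarrow> 'b" and Aadj I \<sigma> u v xd \<omega> \<alpha>
  assume S: "singular_system A I \<sigma> u v" and adj: "is_adjoint A Aadj" and "onorm A = normA"
    and ker: "\<forall>z. A z = 0 \<longrightarrow> inner xd z = 0" and "xd \<noteq> 0"
    and src: "xd = sv_power I \<sigma> u \<mu> \<omega>" and "norm \<omega> \<le> C\<^sub>s" and "0 < \<alpha>" "\<alpha> < \<alpha>max"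
  define M where "M = normA\<^sup>2 + \<alpha>max"
  define N where "N = norm (Aadj (A xd))"
  have "0 < N"
    using normal_operator_nonzero[OF adj ker \<open>xd \<noteq> 0\<close>] by (simp add: N_def)
  have "0 < M"
    using add_nonneg_pos[OF zero_le_power2 \<open>0 < \<alpha>max\<close>] by (simp add: M_def)
  have "\<alpha> / M ^ 3 * N\<^sup>2 \<le> (psi_SL I \<sigma> u \<alpha> xd)\<^sup>2"
    unfolding N_def using \<open>onorm A = normA\<close> \<open>\<alpha> < \<alpha>max\<close>
    by (intro psi_SL_power2_lower_bound[OF S adj \<open>0 < \<alpha>\<close>]) (simp add: M_def)
  then have "\<alpha> powr \<mu> \<le> M powr (3 * \<mu>) / N powr (2 * \<mu>) * psi_SL I \<sigma> u \<alpha> xd powr (2 * \<mu>)"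
    using \<open>0 < \<mu>\<close> \<open>0 < \<alpha>\<close> \<open>0 < M\<close> \<open>0 < N\<close> psi_SL_nonneg
    by (intro powr_le_of_power2_lower_bound) auto
  moreover have "norm (tikhonov A Aadj \<alpha> (A xd) - xd) \<le> \<bar>C\<^sub>s\<bar> * \<alpha> powr \<mu>"
    using tikhonov_error_le_source[OF S adj \<open>0 < \<alpha>\<close> \<open>0 < \<mu>\<close> \<open>\<mu> \<le> 1\<close> src \<open>xd \<noteq> 0\<close>] \<open>norm \<omega> \<le> C\<^sub>s\<close>
    by (smt (verit) mult_right_mono powr_ge_zero)
  ultimately show "norm (tikhonov A Aadj \<alpha> (A xd) - xd)
      \<le> \<bar>C\<^sub>s\<bar> * (normA\<^sup>2 + \<alpha>max) powr (3 * \<mu>) / norm (Aadj (A xd)) powr (2 * \<mu>)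
        * psi_SL I \<sigma> u \<alpha> xd powr (2 * \<mu>)"
    unfolding M_def N_def by (smt (verit) abs_ge_zero mult_left_mono times_divide_eq_right mult.assoc)
qed

end
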